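(* Let $(X,d)$ be a complete metric space and let $f:\ell_\infty(X)\to X$ satisfy $L_{s,q}(f)<1$ for some $q\in(0,1)$; let $x_*$ be the generalized contractive fixed point of $f$. Fix $x\in X$ and for $n\in\mathbb{N}$ define $f_n:X^n\to X$ by $f_n(x_0,\dots,x_{n-1}):=f(x_0,\dots,x_{n-1},x,x,\dots)$. Then for every $n\in\mathbb{N}$, the Lipschitz constant of $f_n$ with respect to the maximum metric $d_n((x_0,\dots,x_{n-1}),(y_0,\dots,y_{n-1}))=\max_{i<n}d(x_i,y_i)$ on $X^n$ satisfies $\mathrm{Lip}(f_n)\le L_{s,q}(f)$; consequently $f_n$ has a unique point $x_*^n\in X$ with $f_n(x_*^n,\dots,x_*^n)=x_*^n$, and $$d(x_*^n,x_* )\le q^n\frac{L_{s,q}(f)}{1-L_{s,q}(f)}\,d(x_*,x).$$ In particular $x_*^n\to x_*$.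
   Context: $\mathbb{N}^*=\{0,1,2,\dots\}$; $\ell_\infty(X)$ is the set of all bounded sequences $(x_n)_{n\in\mathbb{N}^*}$ in $X$. For $q\in(0,1)$, $d_{s,q}(x,y):=\sup\{q^n d(x_n,y_n):n\in\mathbb{N}^*\}$ and $L_{s,q}(f)$ is the Lipschitz constant of $f$ with respect to $d_{s,q}$ on $\ell_\infty(X)$ and $d$ on $X$. A point $x_*\in X$ is a generalized fixed point of $f$ if $f(x_*,x_*,\dots)=x_*$; a generalized contractive fixed point is one to which, for every starting $x\in\ell_\infty(X)$, the generalized iterates $x^k:=f(\tilde x^{k-1})$, $\tilde x^k:=(f(\tilde x^{k-1}),\tilde x^{k-1}_0,\tilde x^{k-1}_1,\dots)$, $\tilde x^0:=x$, converge (under the hypothesis it exists and is unique). *)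

theory Defs
  imports "HOL-Analysis.Analysis"
begin

definition linf :: "(nat \<Rightarrow> 'a::metric_space) set" where
  "linf = {s. bounded (range s)}"

definition dsq :: "real \<Rightarrow> (nat \<Rightarrow> 'a::metric_space) \<Rightarrow> (nat \<Rightarrow> 'a) \<Rightarrow> real" where
  "dsq q s t = (SUP n. q ^ n * dist (s n) (t n))"

definition Lsq :: "real \<Rightarrow> ((nat \<Rightarrow> 'a::metric_space) \<Rightarrow> 'a) \<Rightarrow> ereal" where
  "Lsq q f = (SUP p \<in> {(s, t). s \<in> linf \<and> t \<in> linf \<and> dsq q s t \<noteq> 0}.
      ereal (dist (f (fst p)) (f (snd p)) / dsq q (fst p) (snd p)))"

text \<open>Maximum metric on X^n, with X^n represented as lists of length n.\<close>
definition dmax :: "nat \<Rightarrow> 'a::metric_space list \<Rightarrow> 'a list \<Rightarrow> real" where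
  "dmax n xs ys = Max ((\<lambda>i. dist (xs ! i) (ys ! i)) ` {..<n})"

definition Lip_n :: "nat \<Rightarrow> ('a::metric_space list \<Rightarrow> 'a) \<Rightarrow> ereal" where
  "Lip_n n g = (SUP p \<in> {(xs, ys). length xs = n \<and> length ys = n \<and> dmax n xs ys \<noteq> 0}.
      ereal (dist (g (fst p)) (g (snd p)) / dmax n (fst p) (snd p)))"

text \<open>Generalized iterates: tilde x^0 = s, tilde x^{k+1} = (f(tilde x^k), tilde x^k_0, tilde x^k_1, ...).
  The iterate x^{k+1} = f(tilde x^k).\<close>
primrec gen_tilde :: "((nat \<Rightarrow> 'a) \<Rightarrow> 'a) \<Rightarrow> (nat \<Rightarrow> 'a) \<Rightarrow> nat \<Rightarrow> (nat \<Rightarrow> 'a)" where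
  "gen_tilde f s 0 = s"
| "gen_tilde f s (Suc k) = (\<lambda>i. if i = 0 then f (gen_tilde f s k) else gen_tilde f s k (i - 1))"

definition gen_fixed_point :: "((nat \<Rightarrow> 'a) \<Rightarrow> 'a) \<Rightarrow> 'a \<Rightarrow> bool" where
  "gen_fixed_point f p \<longleftrightarrow> f (\<lambda>_. p) = p"

definition gen_contractive_fixed_point :: "((nat \<Rightarrow> 'a::metric_space) \<Rightarrow> 'a) \<Rightarrow> 'a \<Rightarrow> bool" where
  "gen_contractive_fixed_point f p \<longleftrightarrow> gen_fixed_point f p \<and>
     (\<forall>s \<in> linf. (\<lambda>k. f (gen_tilde f s k)) \<longlonglongrightarrow> p)"

definition trunc_map :: "((nat \<Rightarrow> 'a) \<Rightarrow> 'a) \<Rightarrow> 'a \<Rightarrow> nat \<Rightarrow> 'a list \<Rightarrow> 'a" where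
  "trunc_map f x n xs = f (\<lambda>i. if i < n then xs ! i else x)"

end

theory Submission
  imports Defs
begin

text \<open>
  Write \<open>L\<close> for the Lipschitz constant of \<open>f\<close> with respect to \<open>d\<^sub>s\<^sub>,\<^sub>q\<close>. Padding a finite argument
  with the constant tail \<open>x\<close> does not increase distances, since the weights \<open>q\<^sup>i\<close> are at most 1;
  hence \<open>f\<^sub>n\<close> is \<open>L\<close>-Lipschitz for the maximum metric, and its diagonal \<open>p \<mapsto> f\<^sub>n(p,\<dots>,p)\<close> is an
  \<open>L\<close>-contraction of the complete space, with a unique fixed point \<open>x\<^sub>*\<^sup>n\<close> by Banach's theorem.
  Comparing the padded constant sequence of \<open>x\<^sub>*\<^sup>n\<close> with the constant sequence of \<open>x\<^sub>*\<close>, the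
  first \<open>n\<close> entries differ by \<open>D = d(x\<^sub>*\<^sup>n, x\<^sub>*)\<close> and the tail only contributes \<open>E = q\<^sup>n d(x, x\<^sub>*)\<close>,
  so \<open>D \<le> L max D E\<close>, which forces \<open>D \<le> L E \<le> L/(1-L) E\<close>.
\<close>

lemma bdd_above_weighted_dist:
  fixes s t :: "nat \<Rightarrow> 'a::metric_space"
  assumes "s \<in> linf" "t \<in> linf" "0 \<le> q" "q \<le> 1"
  shows "bdd_above (range (\<lambda>n. q ^ n * dist (s n) (t n)))"
proof -
  have "bounded (range s \<union> range t)"
    using assms(1,2) by (simp add: linf_def)
  then obtain a e where e: "\<And>y. y \<in> range s \<union> range t \<Longrightarrow> dist a y \<le> e"
    unfolding bounded_def by blast
  have "q ^ n * dist (s n) (t n) \<le> 2 * e" for n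
  proof -
    have "q ^ n * dist (s n) (t n) \<le> dist (s n) (t n)"
      using assms(3,4) by (simp add: mult_left_le_one_le power_le_one)
    also have "\<dots> \<le> dist a (s n) + dist a (t n)"
      by (metis dist_commute dist_triangle)
    also have "\<dots> \<le> 2 * e"
      using e[of "s n"] e[of "t n"] by simp
    finally show ?thesis .
  qed
  then show ?thesis
    by (intro bdd_aboveI2)
qed

lemma dsq_upper:
  fixes s t :: "nat \<Rightarrow> 'a::metric_space"
  assumes "s \<in> linf" "t \<in> linf" "0 \<le> q" "q \<le> 1"
  shows "q ^ n * dist (s n) (t n) \<le> dsq q s t"
  unfolding dsq_def by (rule cSUP_upper[OF _ bdd_above_weighted_dist[OF assms]]) simp

lemma dsq_nonneg:
  fixes s t :: "nat \<Rightarrow> 'a::metric_space"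
  assumes "s \<in> linf" "t \<in> linf" "0 \<le> q" "q \<le> 1"
  shows "0 \<le> dsq q s t"
  using dsq_upper[OF assms, of 0] by (metis mult_1 power_0 order_trans zero_le_dist)

lemma dsq_least:
  assumes "\<And>n. q ^ n * dist (s n) (t n) \<le> B"
  shows "dsq q s t \<le> B"
  unfolding dsq_def by (rule cSUP_least) (use assms in auto)

lemma eq_if_dsq_eq_0:
  fixes s t :: "nat \<Rightarrow> 'a::metric_space"
  assumes "s \<in> linf" "t \<in> linf" "0 < q" "q \<le> 1" "dsq q s t = 0"
  shows "s = t"
proof
  fix n
  have "q ^ n * dist (s n) (t n) \<le> 0"
    using dsq_upper[of s t q n] assms by simp
  then show "s n = t n"
    using zero_less_power[OF assms(3), of n] by (simp add: mult_le_0_iff)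
qed

lemma dsq_le_max_prefix_tail:
  assumes "0 \<le> q" "q \<le> 1"
    and prefix: "\<And>i. i < n \<Longrightarrow> dist (s i) (t i) \<le> D"
    and tail: "\<And>i. n \<le> i \<Longrightarrow> dist (s i) (t i) \<le> E"
  shows "dsq q s t \<le> max D (q ^ n * E)"
proof (rule dsq_least)
  fix i
  show "q ^ i * dist (s i) (t i) \<le> max D (q ^ n * E)"
  proof (cases "i < n")
    case True
    have "q ^ i * dist (s i) (t i) \<le> dist (s i) (t i)"
      using assms(1,2) by (simp add: mult_left_le_one_le power_le_one)
    with prefix[OF True] show ?thesis by simp
  next
    case False
    then have "0 \<le> E"
      using tail[of i] by (meson not_less order_trans zero_le_dist)
    have "q ^ i * dist (s i) (t i) \<le> q ^ i * E"
      using False tail assms(1) by (simp add: mult_left_mono)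
    also have "\<dots> \<le> q ^ n * E"
      using False assms \<open>0 \<le> E\<close> by (simp add: mult_right_mono power_decreasing)
    finally show ?thesis by simp
  qed
qed

lemma ratio_le_Lsq:
  assumes "s \<in> linf" "t \<in> linf" "dsq q s t \<noteq> 0"
  shows "ereal (dist (f s) (f t) / dsq q s t) \<le> Lsq q f"
  unfolding Lsq_def by (rule SUP_upper2[of "(s, t)"]) (use assms in auto)

text \<open>\<open>Lsq q f = -\<infinity>\<close> happens exactly when the space has a single point; \<open>real_of_ereal\<close> maps it to 0.\<close>

lemma real_of_Lsq_nonneg:
  fixes f :: "(nat \<Rightarrow> 'a::metric_space) \<Rightarrow> 'a"
  assumes "0 \<le> q" "q \<le> 1"
  shows "0 \<le> real_of_ereal (Lsq q f)"
proof (cases "\<exists>s\<in>linf. \<exists>t\<in>linf. dsq q s (t::nat \<Rightarrow> 'a) \<noteq> 0")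
  case True
  then obtain s t :: "nat \<Rightarrow> 'a" where st: "s \<in> linf" "t \<in> linf" "dsq q s t \<noteq> 0"
    by blast
  have "0 \<le> ereal (dist (f s) (f t) / dsq q s t)"
    using dsq_nonneg[OF st(1,2) assms] by simp
  also have "\<dots> \<le> Lsq q f"
    by (rule ratio_le_Lsq[OF st])
  finally show ?thesis
    by (rule real_of_ereal_pos)
next
  case False
  then have empty: "{(s, t :: nat \<Rightarrow> 'a). s \<in> linf \<and> t \<in> linf \<and> dsq q s t \<noteq> 0} = {}"
    by auto
  have "Lsq q f = -\<infinity>"
    unfolding Lsq_def empty by (simp add: bot_ereal_def)
  then show ?thesis by simp
qed

lemma dist_le_Lsq_dsq:
  assumes "s \<in> linf" "t \<in> linf" "0 < q" "q \<le> 1" "Lsq q f \<noteq> \<infinity>"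
  shows "dist (f s) (f t) \<le> real_of_ereal (Lsq q f) * dsq q s t"
proof (cases "dsq q s t = 0")
  case True
  then show ?thesis
    using eq_if_dsq_eq_0[OF assms(1-4)] by simp
next
  case False
  then have pos: "0 < dsq q s t"
    using dsq_nonneg[of s t q] assms by simp
  have ratio: "ereal (dist (f s) (f t) / dsq q s t) \<le> Lsq q f"
    by (rule ratio_le_Lsq[OF assms(1,2) False])
  then have "Lsq q f \<noteq> -\<infinity>"
    by auto
  with ratio assms(5) have "dist (f s) (f t) / dsq q s t \<le> real_of_ereal (Lsq q f)"
    by (cases "Lsq q f") auto
  with pos show ?thesis
    by (simp add: divide_le_eq)
qed

lemma dmax_upper:
  assumes "i < n"
  shows "dist (ys ! i) (zs ! i) \<le> dmax n ys zs"
  unfolding dmax_def by (rule Max_ge) (use assms in auto)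

lemma dmax_attained:
  assumes "1 \<le> n"
  obtains i where "i < n" "dmax n ys zs = dist (ys ! i) (zs ! i)"
proof -
  have "dmax n ys zs \<in> (\<lambda>i. dist (ys ! i) (zs ! i)) ` {..<n}"
    unfolding dmax_def by (rule Max_in) (use assms in \<open>auto simp: lessThan_empty_iff\<close>)
  with that show ?thesis by blast
qed

lemma padded_in_linf: "(\<lambda>i. if i < n then s i else x) \<in> linf"
proof -
  have "range (\<lambda>i. if i < n then s i else x) \<subseteq> insert x (s ` {..<n})"
    by auto
  then show ?thesis
    unfolding linf_def by (auto intro: bounded_subset finite_imp_bounded)
qed

lemma const_in_linf: "(\<lambda>_. p) \<in> linf"
  unfolding linf_def by (simp add: finite_imp_bounded)

lemma trunc_map_ratio_le_Lsq:
  fixes f :: "(nat \<Rightarrow> 'a::metric_space) \<Rightarrow> 'a"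
  assumes q: "0 < q" "q \<le> 1" and n: "1 \<le> n" and "dmax n ys zs \<noteq> 0"
  shows "ereal (dist (trunc_map f x n ys) (trunc_map f x n zs) / dmax n ys zs) \<le> Lsq q f"
proof -
  define s where "s = (\<lambda>i. if i < n then ys ! i else x)"
  define t where "t = (\<lambda>i. if i < n then zs ! i else x)"
  have st: "s \<in> linf" "t \<in> linf"
    unfolding s_def t_def by (rule padded_in_linf)+
  obtain i where i: "i < n" "dmax n ys zs = dist (ys ! i) (zs ! i)"
    using dmax_attained[OF n] .
  have "dsq q s t \<le> max (dmax n ys zs) (q ^ n * 0)"
    using q by (intro dsq_le_max_prefix_tail) (auto simp: s_def t_def dmax_upper)
  then have dsq_le: "dsq q s t \<le> dmax n ys zs"
    using i by simp
  have "0 < q ^ i * dist (s i) (t i)"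
    using i q \<open>dmax n ys zs \<noteq> 0\<close> by (simp add: s_def t_def)
  also have "\<dots> \<le> dsq q s t"
    using dsq_upper[OF st] q by simp
  finally have dsq_pos: "0 < dsq q s t" .
  have "ereal (dist (f s) (f t) / dmax n ys zs) \<le> ereal (dist (f s) (f t) / dsq q s t)"
    using dsq_le dsq_pos by (simp add: divide_left_mono)
  also have "\<dots> \<le> Lsq q f"
    using ratio_le_Lsq[OF st] dsq_pos by simp
  finally show ?thesis
    by (simp add: trunc_map_def s_def t_def)
qed

lemma Lip_n_trunc_map_le_Lsq:
  fixes f :: "(nat \<Rightarrow> 'a::metric_space) \<Rightarrow> 'a"
  assumes "0 < q" "q \<le> 1" "1 \<le> n"
  shows "Lip_n n (trunc_map f x n) \<le> Lsq q f"
  unfolding Lip_n_def by (rule SUP_least) (use assms in \<open>auto intro: trunc_map_ratio_le_Lsq\<close>)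

lemma trunc_map_replicate:
  "trunc_map f x n (replicate n p) = f (\<lambda>i. if i < n then p else x)"
  unfolding trunc_map_def by (rule arg_cong[where f = f]) auto

lemma trunc_map_diagonal_contraction:
  fixes f :: "(nat \<Rightarrow> 'a::metric_space) \<Rightarrow> 'a"
  assumes "0 < q" "q \<le> 1" "Lsq q f \<noteq> \<infinity>"
  shows "dist (trunc_map f x n (replicate n p)) (trunc_map f x n (replicate n p'))
           \<le> real_of_ereal (Lsq q f) * dist p p'"
proof -
  let ?s = "\<lambda>i. if i < n then p else x" and ?t = "\<lambda>i. if i < n then p' else x"
  have "dist (f ?s) (f ?t) \<le> real_of_ereal (Lsq q f) * dsq q ?s ?t"
    using assms by (intro dist_le_Lsq_dsq padded_in_linf)
  also have "\<dots> \<le> real_of_ereal (Lsq q f) * dist p p'"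
  proof (rule mult_left_mono)
    show "dsq q ?s ?t \<le> dist p p'"
      using dsq_le_max_prefix_tail[of q n ?s ?t "dist p p'" 0] assms by simp
  qed (use assms in \<open>simp add: real_of_Lsq_nonneg\<close>)
  finally show ?thesis
    by (simp add: trunc_map_replicate)
qed

lemma real_of_ereal_less_one: "(c::ereal) < 1 \<Longrightarrow> real_of_ereal c < 1"
  by (cases c) auto

lemma trunc_map_unique_fixed_point:
  fixes f :: "(nat \<Rightarrow> 'a::{metric_space, complete_space}) \<Rightarrow> 'a"
  assumes "0 < q" "q \<le> 1" "Lsq q f < 1"
  shows "\<exists>!p. trunc_map f x n (replicate n p) = p"
  using assms
  by (intro banach_fix_type[of "real_of_ereal (Lsq q f)"] allI trunc_map_diagonal_contraction)
    (auto simp: real_of_Lsq_nonneg real_of_ereal_less_one)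

lemma le_of_le_mult_max:
  fixes c D E :: real
  assumes "0 \<le> c" "c < 1" "0 \<le> E" "D \<le> c * max D E"
  shows "D \<le> c / (1 - c) * E"
proof (cases "D \<le> E")
  case True
  then have "D \<le> c * E"
    using assms(4) by simp
  also have "\<dots> \<le> c / (1 - c) * E"
  proof (rule mult_right_mono)
    have "c * (1 - c) \<le> c"
      using assms(1) by (simp add: algebra_simps)
    then show "c \<le> c / (1 - c)"
      using assms(2) by (simp add: le_divide_eq)
  qed (rule assms(3))
  finally show ?thesis .
next
  case False
  then have "D \<le> c * D" and "0 < D"
    using assms(3,4) by simp_all
  then have "(1 - c) * D \<le> 0"
    by (simp add: algebra_simps)
  moreover have "0 < (1 - c) * D"
    using \<open>0 < D\<close> assms(2) by simp
  ultimately show ?thesis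
    by simp
qed

lemma trunc_map_fixed_point_dist:
  fixes f :: "(nat \<Rightarrow> 'a::metric_space) \<Rightarrow> 'a"
  assumes q: "0 < q" "q \<le> 1" and L: "Lsq q f < 1"
    and fixed: "f (\<lambda>_. xs) = xs" and p: "trunc_map f x n (replicate n p) = p"
  shows "dist p xs
           \<le> q ^ n * (real_of_ereal (Lsq q f) / (1 - real_of_ereal (Lsq q f))) * dist xs x"
proof -
  let ?c = "real_of_ereal (Lsq q f)" and ?s = "\<lambda>i. if i < n then p else x"
  have "dist p xs = dist (f ?s) (f (\<lambda>_. xs))"
    using p fixed by (simp add: trunc_map_replicate)
  also have "\<dots> \<le> ?c * dsq q ?s (\<lambda>_. xs)"
    using q L by (intro dist_le_Lsq_dsq padded_in_linf const_in_linf) auto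
  also have "\<dots> \<le> ?c * max (dist p xs) (q ^ n * dist x xs)"
    using q by (intro mult_left_mono dsq_le_max_prefix_tail) (auto simp: real_of_Lsq_nonneg)
  finally have "dist p xs \<le> ?c / (1 - ?c) * (q ^ n * dist x xs)"
    using q L by (intro le_of_le_mult_max) (simp_all add: real_of_Lsq_nonneg real_of_ereal_less_one)
  then show ?thesis
    by (simp add: dist_commute ac_simps)
qed

lemma LIMSEQ_of_dist_le_geometric:
  fixes a :: "nat \<Rightarrow> 'a::metric_space"
  assumes "0 \<le> q" "q < 1" "\<And>n. dist (a n) l \<le> q ^ n * K"
  shows "a \<longlonglongrightarrow> l"
proof -
  have "(\<lambda>n. q ^ n * K) \<longlonglongrightarrow> 0"
    using assms(1,2) by (intro tendsto_mult_left_zero LIMSEQ_power_zero) simp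
  then have "(\<lambda>n. dist (a n) l) \<longlonglongrightarrow> 0"
    by (rule Lim_null_comparison[rotated]) (simp add: assms(3))
  then show ?thesis
    by (subst tendsto_dist_iff)
qed

theorem mainTheorem15:
  fixes f :: "(nat \<Rightarrow> 'a::{metric_space, complete_space}) \<Rightarrow> 'a"
    and q :: real and xs x :: 'a
  assumes "0 < q" and "q < 1"
    and "Lsq q f < 1"
    and "gen_contractive_fixed_point f xs"
  shows "(\<forall>n::nat. n \<ge> 1 \<longrightarrow>
            Lip_n n (trunc_map f x n) \<le> Lsq q f
          \<and> (\<exists>!p. trunc_map f x n (replicate n p) = p)
          \<and> dist (THE p. trunc_map f x n (replicate n p) = p) xs
              \<le> q ^ n * (real_of_ereal (Lsq q f) / (1 - real_of_ereal (Lsq q f))) * dist xs x)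
       \<and> (\<lambda>n. THE p. trunc_map f x n (replicate n p) = p) \<longlonglongrightarrow> xs"
proof -
  have q: "0 < q" "q \<le> 1"
    using assms(1,2) by simp_all
  have fixed: "f (\<lambda>_. xs) = xs"
    using assms(4) by (simp add: gen_contractive_fixed_point_def gen_fixed_point_def)
  have unique: "\<exists>!p. trunc_map f x n (replicate n p) = p" for n
    by (rule trunc_map_unique_fixed_point[OF q assms(3)])
  have estimate: "dist (THE p. trunc_map f x n (replicate n p) = p) xs
      \<le> q ^ n * (real_of_ereal (Lsq q f) / (1 - real_of_ereal (Lsq q f))) * dist xs x" for n
    by (rule trunc_map_fixed_point_dist[OF q assms(3) fixed theI'[OF unique]])
  have limit: "(\<lambda>n. THE p. trunc_map f x n (replicate n p) = p) \<longlonglongrightarrow> xs"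
    by (rule LIMSEQ_of_dist_le_geometric[OF _ assms(2) estimate[unfolded mult.assoc]])
      (use assms(1) in simp)
  show ?thesis
  proof (intro conjI allI impI)
    show "Lip_n n (trunc_map f x n) \<le> Lsq q f" if "1 \<le> n" for n
      using Lip_n_trunc_map_le_Lsq[OF q that] .
  qed (rule unique estimate limit)+
qed

end
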